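(* Let $\mathbf{m}=(m_i)_{i\in I}$ with $m_i\in\mathbb{Z}_{\ge0}$, $m=\sum_i m_i$, and let $(\mathbf{i},\mathbf{a})\in I^m\times\mathbb{Z}^m$ be an integral pair such that $a_1\le a_2\le\dots\le a_m$ and $\mathbf{i}$ is a rearrangement of $\mathbf{i}_{\mathbf{m}}$. Let $\pi\in S_m$ be the shortest permutation with $\pi(\mathbf{i})=\mathbf{i}_{\mathbf{m}}$. Then $\pi$ is $(\mathbf{i},\mathbf{a})$-admissible.
   Context: $I$ is the vertex set of a finite simple bipartite graph $I=I_{\bar0}\sqcup I_{\bar1}$ (parities $0,1$); every edge is oriented from its even endpoint to its odd endpoint, and $i\leftarrow j$ means there is an oriented edge from $j$ to $i$. Fix a total order on $I$ in which all even vertices precede all odd ones. $\mathbf{i}_{\mathbf{m}}\in I^m$ is the sequence in which the vertices of $I$ appear in this total order, each $i$ repeated $m_i$ times. $(\mathbf{i},\mathbf{a})$ is integral if each $a_k$ is an integer whose residue mod 2 equals the parity of $i_k$. $S_m$ acts on tuples by $\pi(\mathbf{a})=(a_{\pi^{-1}(1)},\dots,a_{\pi^{-1}(m)})$. Distinct indices $k,l$ are not $(\mathbf{i},\mathbf{a})$-switchable if $i_k\leftarrow i_l$ and $a_k=a_l+1$ (checked for the pair in either order); $\pi$ is $(\mathbf{i},\mathbf{a})$-admissible if for every non-switchable pair $k,l$, $\pi(k),\pi(l)$ are in the same relative order as $k,l$. *)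

theory Defs
  imports "HOL-Combinatorics.Permutations"
begin

text \<open>Vertices: a finite set V of a linearly ordered type; parity par v (True = odd);
  E j i means an oriented edge from j to i, i.e. i \<leftarrow> j.\<close>

definition oriented_bipartite :: "'v set \<Rightarrow> ('v \<Rightarrow> bool) \<Rightarrow> ('v \<Rightarrow> 'v \<Rightarrow> bool) \<Rightarrow> bool" where
  "oriented_bipartite V par E \<longleftrightarrow> finite V \<and>
     (\<forall>j i. E j i \<longrightarrow> j \<in> V \<and> i \<in> V \<and> \<not> par j \<and> par i)"

definition evens_first :: "'v::linorder set \<Rightarrow> ('v \<Rightarrow> bool) \<Rightarrow> bool" where
  "evens_first V par \<longleftrightarrow> (\<forall>u\<in>V. \<forall>v\<in>V. \<not> par u \<and> par v \<longrightarrow> u < v)"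

definition seq_m :: "'v::linorder set \<Rightarrow> ('v \<Rightarrow> nat) \<Rightarrow> 'v list" where
  "seq_m V mm = concat (map (\<lambda>v. replicate (mm v) v) (sorted_list_of_set V))"

definition integral_pair :: "('v \<Rightarrow> bool) \<Rightarrow> 'v list \<Rightarrow> int list \<Rightarrow> bool" where
  "integral_pair par is as \<longleftrightarrow> length is = length as \<and>
     (\<forall>k<length is. as ! k mod 2 = (if par (is ! k) then 1 else 0))"

definition perm_act :: "(nat \<Rightarrow> nat) \<Rightarrow> 'a list \<Rightarrow> 'a list" where
  "perm_act p xs = map (\<lambda>k. xs ! inv p k) [0..<length xs]"

definition perm_length :: "nat \<Rightarrow> (nat \<Rightarrow> nat) \<Rightarrow> nat" where
  "perm_length n p = card {(k, l). k < l \<and> l < n \<and> p l < p k}"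

definition not_switchable :: "('v \<Rightarrow> 'v \<Rightarrow> bool) \<Rightarrow> 'v list \<Rightarrow> int list \<Rightarrow> nat \<Rightarrow> nat \<Rightarrow> bool" where
  "not_switchable E is as k l \<longleftrightarrow>
     (E (is ! l) (is ! k) \<and> as ! k = as ! l + 1) \<or> (E (is ! k) (is ! l) \<and> as ! l = as ! k + 1)"

definition admissible :: "('v \<Rightarrow> 'v \<Rightarrow> bool) \<Rightarrow> 'v list \<Rightarrow> int list \<Rightarrow> (nat \<Rightarrow> nat) \<Rightarrow> bool" where
  "admissible E is as p \<longleftrightarrow>
     (\<forall>k<length is. \<forall>l<length is. k \<noteq> l \<and> not_switchable E is as k l \<longrightarrow>
        (k < l \<longleftrightarrow> p k < p l))"

end

theory Submission
  imports Defs
begin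

(* The edge forces i_l < i_k
   (even vertices come first), so the sorted target puts p l before p k, while a_l < a_k and
   the sortedness of a force l < k. *)

lemma sorted_seq_m: "sorted (seq_m V mm)"
proof -
  have "sorted (concat (map (\<lambda>v. replicate (mm v) v) xs))" if "sorted xs" for xs :: "'a list"
    using that by (induction xs) (auto simp: sorted_append)
  then show ?thesis
    unfolding seq_m_def by simp
qed

lemma sorted_nth_less_imp_less:
  assumes "sorted xs" "l < length xs" "xs ! l < xs ! k"
  shows "l < k"
  using assms sorted_nth_mono[of xs k l] by (cases "k \<le> l") auto

lemma length_perm_act [simp]: "length (perm_act p xs) = length xs"
  by (simp add: perm_act_def)

lemma perm_act_nth_image:
  assumes "p permutes {0..<length xs}" "k < length xs"
  shows "perm_act p xs ! p k = xs ! k"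
proof -
  have "p k < length xs"
    using assms permutes_in_image by fastforce
  then show ?thesis
    using assms(1) by (simp add: perm_act_def permutes_inverses(2))
qed

lemma sorted_perm_act_less_imp_less:
  assumes "p permutes {0..<length xs}" "sorted (perm_act p xs)"
    and "l < length xs" "k < length xs" "xs ! l < xs ! k"
  shows "p l < p k"
proof (rule sorted_nth_less_imp_less[OF assms(2)])
  show "p l < length (perm_act p xs)"
    using assms(1,3) permutes_in_image by fastforce
  show "perm_act p xs ! p l < perm_act p xs ! p k"
    using assms by (simp add: perm_act_nth_image)
qed

lemma oriented_edge_less:
  assumes "oriented_bipartite V par E" "evens_first V par" "E u v"
  shows "u < v"
  using assms unfolding oriented_bipartite_def evens_first_def by blast

lemma sorting_perm_keeps_order_across_edge:
  assumes "oriented_bipartite V par E" "evens_first V par"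
    and "sorted as" "length as = length is"
    and "p permutes {0..<length is}" "sorted (perm_act p is)"
    and "l < length is" "k < length is"
    and "E (is ! l) (is ! k)" "as ! l < as ! k"
  shows "l < k \<and> p l < p k"
proof
  show "l < k"
    using assms(4,7) by (simp add: sorted_nth_less_imp_less[OF assms(3) _ assms(10)])
  have "is ! l < is ! k"
    using assms(1,2,9) by (rule oriented_edge_less)
  with assms(5-8) show "p l < p k"
    by (rule sorted_perm_act_less_imp_less)
qed

lemma admissibleI_oriented:
  assumes "\<And>k l. l < length is \<Longrightarrow> k < length is \<Longrightarrow> E (is ! l) (is ! k) \<Longrightarrow>
      as ! k = as ! l + 1 \<Longrightarrow> l < k \<and> p l < p k"
  shows "admissible E is as p"
proof -
  have "k < l \<longleftrightarrow> p k < p l"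
    if "k < length is" "l < length is" "not_switchable E is as k l" for k l
    using that(3) unfolding not_switchable_def
  proof (elim disjE conjE)
    assume "E (is ! l) (is ! k)" "as ! k = as ! l + 1"
    then have "l < k \<and> p l < p k"
      by (rule assms[OF that(2,1)])
    then show ?thesis
      by auto
  next
    assume "E (is ! k) (is ! l)" "as ! l = as ! k + 1"
    then have "k < l \<and> p k < p l"
      by (rule assms[OF that(1,2)])
    then show ?thesis
      by auto
  qed
  then show ?thesis
    unfolding admissible_def by blast
qed

theorem lemma5p8:
  fixes V :: "'v::linorder set" and par :: "'v \<Rightarrow> bool" and E :: "'v \<Rightarrow> 'v \<Rightarrow> bool"
    and mm :: "'v \<Rightarrow> nat" and "is" :: "'v list" and as :: "int list" and p :: "nat \<Rightarrow> nat"
  assumes "oriented_bipartite V par E"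
    and "evens_first V par"
    and "integral_pair par is as"
    and "sorted as"
    and "mset is = mset (seq_m V mm)"
    and "p permutes {0..<length is}"
    and "perm_act p is = seq_m V mm"
    and "\<And>q. q permutes {0..<length is} \<Longrightarrow> perm_act q is = seq_m V mm \<Longrightarrow>
           perm_length (length is) p \<le> perm_length (length is) q"
  shows "admissible E is as p"
proof (rule admissibleI_oriented)
  fix k l
  assume "l < length is" "k < length is" "E (is ! l) (is ! k)" "as ! k = as ! l + 1"
  show "l < k \<and> p l < p k"
  proof (rule sorting_perm_keeps_order_across_edge[OF assms(1,2,4) _ assms(6)])
    show "length as = length is"
      using assms(3) by (simp add: integral_pair_def)
    show "sorted (perm_act p is)"
      using assms(7) sorted_seq_m by simp
    show "as ! l < as ! k"
      using \<open>as ! k = as ! l + 1\<close> by simp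
  qed fact+
qed

end
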